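(* Let $T$ be a subcubic tree with $\gamma_e^*(T)=\gamma_{e,f}^*(T)>1$. For $i\in\{1,2,3\}$ let $V_i$ be the set of vertices of degree $i$ in $T$, and let $D$ be a minimum porous exponential dominating set of $T$. Then: (i) $w^*_{(T,D)}(u)=1$ for every vertex $u\in V_1\cup V_2$; (ii) $D\subseteq V_3$ and $N_T(V_1\cup V_2)\subseteq V_3\setminus D$, where $N_T(X)$ denotes the set of vertices adjacent to some vertex of $X$; (iii) $T$ contains no vertex $u\in V_1$ and vertex $w\in V_2$ with $\mathrm{dist}_T(u,w)=2$; (iv) $T$ contains no two vertices $u_1,u_2\in V_1$ and vertex $v\in V_2$ such that $\mathrm{dist}_T(u_1,u_2)=2$ and $\mathrm{dist}_T(u_1,v)\in\{3,4\}$.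
   Context: All graphs are finite, simple and undirected; subcubic means maximum degree at most $3$. For a graph $G$ and $D\subseteq V(G)$, let $w^*_{(G,D)}(u)=\sum_{v\in D}\left(\frac12\right)^{\mathrm{dist}_G(u,v)-1}$ for $u\in V(G)$, where $\mathrm{dist}_G$ is the usual distance and $\left(\frac12\right)^\infty=0$. $D$ is a porous exponential dominating set if $w^*_{(G,D)}(u)\ge 1$ for every $u\in V(G)$; $\gamma_e^*(G)$ is the minimum size of such a set, and a porous exponential dominating set of that size is called minimum. The fractional porous exponential domination number $\gamma_{e,f}^*(G)$ is the optimum value of the linear program: minimize $\sum_{u\in V(G)}x(u)$ subject to $\sum_{u\in V(G)}\left(\frac12\right)^{\mathrm{dist}_G(u,v)-1}x(u)\ge 1$ for every $v\in V(G)$ and $x\ge 0$. *)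

theory Defs
  imports "HOL-Analysis.Analysis" "HOL-Library.Extended_Nat"
begin

definition graph :: "'a set \<Rightarrow> ('a \<Rightarrow> 'a \<Rightarrow> bool) \<Rightarrow> bool" where
  "graph V E \<longleftrightarrow> finite V \<and> (\<forall>u v. E u v \<longrightarrow> u \<in> V \<and> v \<in> V)
     \<and> (\<forall>u v. E u v \<longrightarrow> E v u) \<and> (\<forall>u. \<not> E u u)"

definition edge_rel :: "('a \<Rightarrow> 'a \<Rightarrow> bool) \<Rightarrow> ('a \<times> 'a) set" where
  "edge_rel E = {(u, v). E u v}"

definition gdist :: "('a \<Rightarrow> 'a \<Rightarrow> bool) \<Rightarrow> 'a \<Rightarrow> 'a \<Rightarrow> enat" where
  "gdist E u v = (if \<exists>n. (u, v) \<in> edge_rel E ^^ n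
                  then enat (LEAST n. (u, v) \<in> edge_rel E ^^ n) else \<infinity>)"

definition connected_graph :: "'a set \<Rightarrow> ('a \<Rightarrow> 'a \<Rightarrow> bool) \<Rightarrow> bool" where
  "connected_graph V E \<longleftrightarrow> (\<forall>u\<in>V. \<forall>v\<in>V. gdist E u v \<noteq> \<infinity>)"

definition is_cycle :: "('a \<Rightarrow> 'a \<Rightarrow> bool) \<Rightarrow> 'a list \<Rightarrow> bool" where
  "is_cycle E cs \<longleftrightarrow> length cs \<ge> 3 \<and> distinct cs
     \<and> (\<forall>i < length cs - 1. E (cs ! i) (cs ! Suc i)) \<and> E (last cs) (hd cs)"

definition tree :: "'a set \<Rightarrow> ('a \<Rightarrow> 'a \<Rightarrow> bool) \<Rightarrow> bool" where
  "tree V E \<longleftrightarrow> graph V E \<and> V \<noteq> {} \<and> connected_graph V E \<and> (\<nexists>cs. is_cycle E cs)"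

definition degree :: "'a set \<Rightarrow> ('a \<Rightarrow> 'a \<Rightarrow> bool) \<Rightarrow> 'a \<Rightarrow> nat" where
  "degree V E u = card {v \<in> V. E u v}"

definition subcubic :: "'a set \<Rightarrow> ('a \<Rightarrow> 'a \<Rightarrow> bool) \<Rightarrow> bool" where
  "subcubic V E \<longleftrightarrow> (\<forall>u\<in>V. degree V E u \<le> 3)"

definition deg_set :: "'a set \<Rightarrow> ('a \<Rightarrow> 'a \<Rightarrow> bool) \<Rightarrow> nat \<Rightarrow> 'a set" where
  "deg_set V E i = {u \<in> V. degree V E u = i}"

definition nbhd :: "'a set \<Rightarrow> ('a \<Rightarrow> 'a \<Rightarrow> bool) \<Rightarrow> 'a set \<Rightarrow> 'a set" where
  "nbhd V E X = {v \<in> V. \<exists>x\<in>X. E x v}"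

definition half_pow :: "enat \<Rightarrow> real" where
  "half_pow d = (case d of enat n \<Rightarrow> (1/2) powi (int n - 1) | \<infinity> \<Rightarrow> 0)"

definition weight :: "('a \<Rightarrow> 'a \<Rightarrow> bool) \<Rightarrow> 'a set \<Rightarrow> 'a \<Rightarrow> real" where
  "weight E D u = (\<Sum>v\<in>D. half_pow (gdist E u v))"

definition porous_exp_dom :: "'a set \<Rightarrow> ('a \<Rightarrow> 'a \<Rightarrow> bool) \<Rightarrow> 'a set \<Rightarrow> bool" where
  "porous_exp_dom V E D \<longleftrightarrow> D \<subseteq> V \<and> (\<forall>u\<in>V. weight E D u \<ge> 1)"

definition gamma_e :: "'a set \<Rightarrow> ('a \<Rightarrow> 'a \<Rightarrow> bool) \<Rightarrow> nat" where
  "gamma_e V E = (LEAST k. \<exists>D. porous_exp_dom V E D \<and> card D = k)"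

definition min_porous_exp_dom :: "'a set \<Rightarrow> ('a \<Rightarrow> 'a \<Rightarrow> bool) \<Rightarrow> 'a set \<Rightarrow> bool" where
  "min_porous_exp_dom V E D \<longleftrightarrow> porous_exp_dom V E D \<and> card D = gamma_e V E"

text \<open>Optimum value of the LP (infimum of feasible objective values; attained since the
  feasible region is a nonempty polyhedron and the objective is bounded below by 0).\<close>
definition gamma_ef :: "'a set \<Rightarrow> ('a \<Rightarrow> 'a \<Rightarrow> bool) \<Rightarrow> real" where
  "gamma_ef V E = Inf {(\<Sum>u\<in>V. x u) | x :: 'a \<Rightarrow> real.
      (\<forall>u\<in>V. x u \<ge> 0) \<and>
      (\<forall>v\<in>V. (\<Sum>u\<in>V. half_pow (gdist E u v) * x u) \<ge> 1)}"

end

theory Submission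
  imports Defs
begin

text \<open>
  The weights y(v) = (3 - deg v) / 6 form a feasible solution of the fractional LP in which
  every constraint is tight: in a tree every vertex other than x is the far end of exactly one
  edge pointing towards x, whence sum_v deg(v) 2^-d(v,x) = 3 (sum_v 2^-d(v,x) - 1).
  Summing the weights w(v) of D against y therefore yields |D|, while gamma_ef <= sum_v y(v);
  as |D| = gamma_ef and w >= 1, complementary slackness forces w(v) = 1 wherever y(v) > 0,
  i.e. on the vertices of degree 1 and 2.
  The other claims compare w along short paths. Splitting D according to the side of an edge
  on which its members lie, one part of the weight halves and the other doubles across the
  edge; the resulting linear relations either violate w >= 1 or would make a finite sum of
  powers of 1/2 equal to 1/3.
\<close>

lemma relpow_edge_rel_iff_walk:
  "(a, b) \<in> edge_rel E ^^ n \<longleftrightarrow>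
     (\<exists>xs. successively E (a # xs) \<and> length xs = n \<and> last (a # xs) = b)"
proof (induction n arbitrary: a)
  case (Suc n)
  show ?case
  proof
    assume "(a, b) \<in> edge_rel E ^^ Suc n"
    then obtain c where "(a, c) \<in> edge_rel E" "(c, b) \<in> edge_rel E ^^ n"
      by (metis relpow_Suc_D2)
    with Suc obtain xs where "successively E (c # xs)" "length xs = n" "last (c # xs) = b"
      by auto
    with \<open>(a, c) \<in> edge_rel E\<close>
    show "\<exists>xs. successively E (a # xs) \<and> length xs = Suc n \<and> last (a # xs) = b"
      by (intro exI[of _ "c # xs"]) (auto simp: edge_rel_def)
  next
    assume "\<exists>xs. successively E (a # xs) \<and> length xs = Suc n \<and> last (a # xs) = b"
    then obtain c xs where "successively E (a # c # xs)" "length xs = n" "last (c # xs) = b"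
      by (metis Suc_length_conv last_ConsR list.discI)
    with Suc have "(a, c) \<in> edge_rel E" "(c, b) \<in> edge_rel E ^^ n"
      by (auto simp: edge_rel_def)
    then show "(a, b) \<in> edge_rel E ^^ Suc n"
      by (metis relpow_Suc_I2)
  qed
qed simp

lemma gdist_self [simp]: "gdist E u u = 0"
proof -
  have "(u, u) \<in> edge_rel E ^^ 0" by simp
  then show ?thesis unfolding gdist_def zero_enat_def by (metis Least_eq_0)
qed

lemma half_pow_enat: "half_pow (enat n) = 2 * (1/2) ^ n"
  by (simp add: half_pow_def power_int_diff power_int_of_nat)

lemma half_pow_nonneg: "0 \<le> half_pow d"
  by (cases d) (simp_all add: half_pow_enat half_pow_def)

lemma weight_nonneg: "0 \<le> weight E S u"
  unfolding weight_def by (simp add: sum_nonneg half_pow_nonneg)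

lemma weight_Diff:
  "finite S \<Longrightarrow> A \<subseteq> S \<Longrightarrow> weight E S u = weight E A u + weight E (S - A) u"
  unfolding weight_def by (metis sum.subset_diff add.commute)

lemma weight_mono: "finite S \<Longrightarrow> A \<subseteq> S \<Longrightarrow> weight E A u \<le> weight E S u"
  using weight_Diff[of S A E u] weight_nonneg[of E "S - A" u] by linarith

lemma weight_ge_2_of_mem: "finite S \<Longrightarrow> u \<in> S \<Longrightarrow> 2 \<le> weight E S u"
  using weight_mono[of S "{u}" E u] by (simp add: weight_def zero_enat_def half_pow_enat)

lemma sum_powers_half_neq_one_third:
  fixes f :: "'a \<Rightarrow> nat"
  assumes "finite S"
  shows "(\<Sum>s\<in>S. (1/2::real) ^ f s) \<noteq> 1/3"
proof -
  have "\<exists>m K. (\<Sum>s\<in>S. (1/2::real) ^ f s) = real m / 2 ^ K"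
    using assms
  proof (induction S rule: finite_induct)
    case (insert s S)
    then obtain m K where "(\<Sum>s\<in>S. (1/2::real) ^ f s) = real m / 2 ^ K" by blast
    with insert have "(\<Sum>s\<in>insert s S. (1/2::real) ^ f s)
        = real (2 ^ K + m * 2 ^ f s) / 2 ^ (K + f s)"
      by (simp add: power_add field_simps power_one_over)
    then show ?case by blast
  qed (auto intro: exI[of _ 0])
  then obtain m K where "(\<Sum>s\<in>S. (1/2::real) ^ f s) = real m / 2 ^ K" by blast
  moreover have "real m / 2 ^ K \<noteq> 1/3"
  proof
    assume "real m / 2 ^ K = 1/3"
    then have "real (3 * m) = real ((2::nat) ^ K)" by (simp add: field_simps)
    then have "3 * m = (2::nat) ^ K" by (simp only: of_nat_eq_iff)
    moreover have "(2::nat) ^ K mod 3 \<in> {1, 2}"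
    proof (induction K)
      case (Suc K)
      have "(2::nat) ^ Suc K mod 3 = 2 * (2 ^ K mod 3) mod 3" by (simp add: mod_mult_right_eq)
      with Suc show ?case by auto
    qed simp
    ultimately show False
      by (metis empty_iff insert_iff mod_mult_self1_is_0 zero_neq_numeral one_neq_zero)
  qed
  ultimately show ?thesis by simp
qed

lemma weight_eq_1_of_tight_solution:
  fixes y :: "'a \<Rightarrow> real"
  assumes "finite V" "porous_exp_dom V E D" "real (card D) \<le> gamma_ef V E"
    and y_nonneg: "\<And>u. u \<in> V \<Longrightarrow> 0 \<le> y u"
    and y_tight: "\<And>v. v \<in> V \<Longrightarrow> (\<Sum>u\<in>V. half_pow (gdist E u v) * y u) = 1"
    and "u \<in> V" "0 < y u"
  shows "weight E D u = 1"
proof -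
  let ?F = "{(\<Sum>u\<in>V. x u) | x :: 'a \<Rightarrow> real.
      (\<forall>u\<in>V. x u \<ge> 0) \<and> (\<forall>v\<in>V. (\<Sum>u\<in>V. half_pow (gdist E u v) * x u) \<ge> 1)}"
  have D: "D \<subseteq> V" and dom: "\<And>v. v \<in> V \<Longrightarrow> 1 \<le> weight E D v"
    using assms(2) by (auto simp: porous_exp_dom_def)
  have "gamma_ef V E \<le> (\<Sum>u\<in>V. y u)"
    unfolding gamma_ef_def
  proof (rule cInf_lower)
    show "(\<Sum>u\<in>V. y u) \<in> ?F" using y_nonneg y_tight by fastforce
    show "bdd_below ?F" by (rule bdd_belowI[of _ 0]) (auto intro: sum_nonneg)
  qed
  moreover have "(\<Sum>v\<in>V. y v * weight E D v) = real (card D)"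
  proof -
    have "(\<Sum>v\<in>V. y v * weight E D v) = (\<Sum>d\<in>D. \<Sum>v\<in>V. half_pow (gdist E v d) * y v)"
      unfolding weight_def sum_distrib_left by (subst sum.swap) (simp add: mult.commute)
    also have "\<dots> = (\<Sum>d\<in>D. 1)" using y_tight D by (intro sum.cong) auto
    finally show ?thesis by simp
  qed
  ultimately have "(\<Sum>v\<in>V. y v * (weight E D v - 1)) \<le> 0"
    using assms(3) by (simp add: right_diff_distrib sum_subtractf)
  moreover have nonneg: "\<forall>v\<in>V. 0 \<le> y v * (weight E D v - 1)"
    using y_nonneg dom by simp
  ultimately have "\<forall>v\<in>V. y v * (weight E D v - 1) = 0"
    using sum_nonneg_eq_0_iff[OF assms(1)] sum_nonneg[of V "\<lambda>v. y v * (weight E D v - 1)"]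
    by (metis (no_types, lifting) order_antisym)
  then have "y u * (weight E D u - 1) = 0" using assms(6) by blast
  with assms(7) show ?thesis by simp
qed

locale tree_graph =
  fixes V :: "'a set" and E :: "'a \<Rightarrow> 'a \<Rightarrow> bool"
  assumes tree: "tree V E"
begin

lemma finite_V: "finite V"
  using tree by (simp add: tree_def graph_def)

lemma adj_in_V: "E u v \<Longrightarrow> u \<in> V \<and> v \<in> V"
  using tree by (simp add: tree_def graph_def)

lemma adj_sym: "E u v \<Longrightarrow> E v u"
  using tree by (simp add: tree_def graph_def)

lemma adj_irrefl: "\<not> E u u"
  using tree by (simp add: tree_def graph_def)

lemma path_between_neighbours_visits:
  assumes "E w a" "E w b" "a \<noteq> b" "successively E ys" "distinct ys" "ys \<noteq> []"
    and "hd ys = a" "last ys = b"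
  shows "w \<in> set ys"
proof (rule ccontr)
  assume w: "w \<notin> set ys"
  have "is_cycle E (w # ys)"
    unfolding is_cycle_def
  proof (intro conjI)
    show "3 \<le> length (w # ys)"
      using assms(3,6-8) by (cases ys) (auto split: if_splits simp: Suc_le_eq)
    show "distinct (w # ys)" using assms(5) w by simp
    have "successively E (w # ys)"
      using assms(1,4,6,7) by (simp add: successively_Cons)
    then show "\<forall>i < length (w # ys) - 1. E ((w # ys) ! i) ((w # ys) ! Suc i)"
      by (simp add: successively_conv_nth)
    show "E (last (w # ys)) (hd (w # ys))"
      using assms(2,6,8) adj_sym by simp
  qed
  then show False using tree by (auto simp: tree_def)
qed

lemma walk_between_neighbours_visits:
  assumes "E w a" "E w b" "a \<noteq> b"
  shows "successively E ys \<Longrightarrow> ys \<noteq> [] \<Longrightarrow> hd ys = a \<Longrightarrow> last ys = b \<Longrightarrow> w \<in> set ys"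
proof (induction "length ys" arbitrary: ys rule: less_induct)
  case less
  show ?case
  proof (cases "distinct ys")
    case True
    with less.prems show ?thesis by (intro path_between_neighbours_visits[OF assms])
  next
    case False
    then obtain as c bs cs where ys: "ys = as @ [c] @ bs @ [c] @ cs"
      using not_distinct_decomp by blast
    let ?zs = "as @ [c] @ cs"
    have "successively E (c # cs)"
      using less.prems(1) successively_append_iff[of E "as @ [c] @ bs" "c # cs"]
      unfolding ys by simp
    then have "successively E ?zs"
      using less.prems(1) unfolding ys by (auto simp: successively_append_iff)
    moreover have "hd ?zs = a" "last ?zs = b"
      using less.prems unfolding ys by (cases as; cases cs; simp)+
    ultimately have "w \<in> set ?zs"
      by (intro less.hyps) (auto simp: ys)
    then show ?thesis using ys by auto
  qed
qed

definition tdist :: "'a \<Rightarrow> 'a \<Rightarrow> nat" where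
  "tdist u v = (LEAST n. (u, v) \<in> edge_rel E ^^ n)"

lemma walk_exists:
  assumes "u \<in> V" "v \<in> V"
  shows "\<exists>n. (u, v) \<in> edge_rel E ^^ n"
proof -
  have "gdist E u v \<noteq> \<infinity>" using tree assms by (simp add: tree_def connected_graph_def)
  then show ?thesis unfolding gdist_def by presburger
qed

lemma gdist_eq_tdist: "u \<in> V \<Longrightarrow> v \<in> V \<Longrightarrow> gdist E u v = enat (tdist u v)"
  unfolding gdist_def tdist_def using walk_exists by presburger

lemma gdist_eq_numeral_iff:
  "u \<in> V \<Longrightarrow> v \<in> V \<Longrightarrow> gdist E u v = numeral k \<longleftrightarrow> tdist u v = numeral k"
  by (simp add: gdist_eq_tdist numeral_eq_enat)

lemma tdist_le_walk:
  assumes "successively E (u # xs)" "last (u # xs) = v"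
  shows "tdist u v \<le> length xs"
proof -
  have "(u, v) \<in> edge_rel E ^^ length xs"
    using assms by (auto simp only: relpow_edge_rel_iff_walk)
  then show ?thesis unfolding tdist_def by (rule Least_le)
qed

lemma shortest_walkE:
  assumes "u \<in> V" "v \<in> V"
  obtains xs where "successively E (u # xs)" "length xs = tdist u v" "last (u # xs) = v"
proof -
  obtain n where "(u, v) \<in> edge_rel E ^^ n" using walk_exists[OF assms] ..
  then have "(u, v) \<in> edge_rel E ^^ tdist u v" unfolding tdist_def by (rule LeastI)
  then show thesis using that by (auto simp only: relpow_edge_rel_iff_walk)
qed

lemma tdist_less_on_shortest_walk:
  assumes walk: "successively E (u # xs)" "length xs = tdist u v" "last (u # xs) = v"
    and "z \<in> set xs"
  shows "tdist z v < tdist u v"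
proof -
  from \<open>z \<in> set xs\<close> obtain i where i: "i < length xs" "xs ! i = z" by (auto simp: in_set_conv_nth)
  then have drop: "drop i xs = z # drop (Suc i) xs" by (metis Cons_nth_drop_Suc)
  have "successively E xs" using walk(1) by (cases xs) simp_all
  then have "successively E (drop i xs)"
    using successively_append_iff[of E "take i xs" "drop i xs"] by simp
  moreover have "last (drop i xs) = v" using walk(3) i(1) by (auto simp: last_drop split: if_splits)
  ultimately have "tdist z v \<le> length (drop (Suc i) xs)"
    using tdist_le_walk unfolding drop by blast
  with i(1) walk(2) show ?thesis by simp
qed

lemma tdist_self [simp]: "tdist u u = 0"
  using tdist_le_walk[of u "[]"] by simp

lemma tdist_eq_0_iff:
  assumes "u \<in> V" "v \<in> V"
  shows "tdist u v = 0 \<longleftrightarrow> u = v"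
proof
  assume "tdist u v = 0"
  obtain xs where "successively E (u # xs)" "length xs = tdist u v" "last (u # xs) = v"
    by (rule shortest_walkE[OF assms])
  with \<open>tdist u v = 0\<close> show "u = v" by simp
qed simp

lemma tdist_adj_le:
  assumes "E p q" "x \<in> V"
  shows "tdist p x \<le> tdist q x + 1"
proof -
  have "q \<in> V" using assms(1) adj_in_V by blast
  obtain xs where "successively E (q # xs)" "length xs = tdist q x" "last (q # xs) = x"
    by (rule shortest_walkE[OF \<open>q \<in> V\<close> assms(2)])
  with assms(1) show ?thesis using tdist_le_walk[of p "q # xs" x] by simp
qed

lemma tdist_adj:
  assumes "E u v"
  shows "tdist u v = 1"
proof -
  have "u \<in> V" "v \<in> V" "u \<noteq> v" using assms adj_in_V adj_irrefl by auto
  then have "tdist u v \<noteq> 0" using tdist_eq_0_iff by simp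
  moreover have "tdist u v \<le> 1" using tdist_adj_le[OF assms \<open>v \<in> V\<close>] by simp
  ultimately show ?thesis by simp
qed

lemma tdist_eq_1_iff:
  assumes "u \<in> V" "v \<in> V"
  shows "tdist u v = 1 \<longleftrightarrow> E u v"
proof
  assume "tdist u v = 1"
  obtain xs where "successively E (u # xs)" "length xs = tdist u v" "last (u # xs) = v"
    by (rule shortest_walkE[OF assms])
  with \<open>tdist u v = 1\<close> show "E u v" by (auto simp: length_Suc_conv)
qed (rule tdist_adj)

lemma tdist_eq_2E:
  assumes "u \<in> V" "w \<in> V" "tdist u w = 2"
  obtains v where "E u v" "E v w"
proof -
  obtain xs where walk: "successively E (u # xs)" "length xs = tdist u w" "last (u # xs) = w"
    by (rule shortest_walkE[OF assms(1,2)])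
  with assms(3) obtain v w' where "xs = [v, w']" by (auto simp: numeral_2_eq_2 length_Suc_conv)
  with walk have "E u v" "E v w" by auto
  then show thesis by (rule that)
qed

lemma toward_neighbourE:
  assumes "u \<in> V" "v \<in> V" "u \<noteq> v"
  obtains p where "E u p" "tdist u v = tdist p v + 1"
proof -
  obtain xs where walk: "successively E (u # xs)" "length xs = tdist u v" "last (u # xs) = v"
    by (rule shortest_walkE[OF assms(1,2)])
  have "xs \<noteq> []" using walk(3) assms(3) by auto
  then obtain p ys where xs: "xs = p # ys" by (cases xs) auto
  with walk(1) have "E u p" by simp
  moreover have "tdist p v < tdist u v" using tdist_less_on_shortest_walk[OF walk] xs by simp
  moreover have "tdist u v \<le> tdist p v + 1" using tdist_adj_le[OF \<open>E u p\<close> assms(2)] .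
  ultimately show thesis using that by simp
qed

lemma neighbour_not_farther_unique:
  assumes "E w a" "E w b" "x \<in> V" "tdist a x \<le> tdist w x" "tdist b x \<le> tdist w x"
  shows "a = b"
proof (rule ccontr)
  assume "a \<noteq> b"
  have V: "a \<in> V" "b \<in> V" using assms(1,2) adj_in_V by auto
  obtain xs where xs: "successively E (a # xs)" "length xs = tdist a x" "last (a # xs) = x"
    by (rule shortest_walkE[OF V(1) assms(3)])
  have wa: "w \<notin> set (a # xs)"
    using tdist_less_on_shortest_walk[OF xs] assms(1,4) adj_irrefl by fastforce
  obtain ys where ys: "successively E (b # ys)" "length ys = tdist b x" "last (b # ys) = x"
    by (rule shortest_walkE[OF V(2) assms(3)])
  have wb: "w \<notin> set (b # ys)"
    using tdist_less_on_shortest_walk[OF ys] assms(2,5) adj_irrefl by fastforce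
  have sym: "(\<lambda>u v. E v u) = E" using adj_sym by blast
  obtain r rs where r: "rev (b # ys) = r # rs" by (cases "rev (b # ys)") auto
  then have "r = x" using ys(3) by (metis hd_rev list.sel(1))
  have "successively E (r # rs)" using ys(1) r sym by (metis successively_rev)
  then have "rs = [] \<or> E (last (a # xs)) (hd rs)" "successively E rs"
    using xs(3) \<open>r = x\<close> by (cases rs; simp)+
  then have "successively E ((a # xs) @ rs)"
    using xs(1) unfolding successively_append_iff by blast
  moreover have "last ((a # xs) @ rs) = b"
    using r xs(3) ys(3) \<open>r = x\<close> by (cases rs) (auto simp: last_rev dest: arg_cong[of _ _ last])
  moreover have "w \<notin> set ((a # xs) @ rs)"
    using wa wb arg_cong[OF r, of set] by auto
  ultimately show False
    using walk_between_neighbours_visits[OF assms(1,2) \<open>a \<noteq> b\<close>, of "(a # xs) @ rs"] by simp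
qed

lemma tdist_adj_cases:
  assumes "E p q" "x \<in> V"
  shows "tdist p x = tdist q x + 1 \<or> tdist q x = tdist p x + 1"
proof -
  have "tdist p x \<noteq> tdist q x"
  proof
    assume eq: "tdist p x = tdist q x"
    have V: "p \<in> V" "q \<in> V" using assms(1) adj_in_V by auto
    show False
    proof (cases "q = x")
      case True
      with eq V assms(2) have "p = x" using tdist_eq_0_iff by simp
      with True assms(1) adj_irrefl show False by simp
    next
      case False
      then obtain r where "E q r" "tdist q x = tdist r x + 1"
        using toward_neighbourE V assms(2) by metis
      with eq neighbour_not_farther_unique[of q p r x] adj_sym[OF assms(1)] assms(2) show False
        by simp
    qed
  qed
  then show ?thesis
    using tdist_adj_le[OF assms] tdist_adj_le[OF adj_sym[OF assms(1)] assms(2)] by linarith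
qed

lemma tdist_away:
  assumes "E b a" "E b c" "a \<noteq> c" "x \<in> V" "tdist b x = tdist a x + 1"
  shows "tdist c x = tdist b x + 1"
  using neighbour_not_farther_unique[OF assms(1,2,4)] tdist_adj_cases[OF assms(2,4)] assms(3,5)
  by force

lemma neighbours_eq_insert:
  assumes "degree V E x = Suc (card A)" "finite A" "A \<subseteq> {p. E x p}"
  obtains z where "z \<notin> A" "{p. E x p} = insert z A"
proof -
  have N: "{p. E x p} = {p \<in> V. E x p}" using adj_in_V by auto
  then have "finite {p. E x p}" using finite_V by simp
  moreover have "card {p. E x p} = Suc (card A)" using assms(1) N by (simp add: degree_def)
  ultimately have "card ({p. E x p} - A) = 1" using assms(2,3) by (simp add: card_Diff_subset)
  then obtain z where "{p. E x p} - A = {z}" by (rule card_1_singletonE)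
  with assms(3) that show thesis by blast
qed

lemma tdist_from_leaf:
  assumes "degree V E u = 1" "E u v" "d \<in> V" "d \<noteq> u"
  shows "tdist u d = tdist v d + 1"
proof -
  obtain z where z: "{p. E u p} = {z}" using neighbours_eq_insert[of u "{}"] assms(1) by auto
  obtain p where p: "E u p" "tdist u d = tdist p d + 1"
    using toward_neighbourE assms adj_in_V by metis
  have "p \<in> {z}" "v \<in> {z}" using z p(1) assms(2) by auto
  then have "p = v" by simp
  with p(2) show ?thesis by simp
qed

lemma toward_third_neighbourE:
  assumes "degree V E v = 3" "degree V E u1 = 1" "degree V E u2 = 1" "E u1 v" "E u2 v" "u1 \<noteq> u2"
  obtains z where "E v z" "\<And>d. d \<in> V \<Longrightarrow> d \<notin> {v, u1, u2} \<Longrightarrow> tdist v d = tdist z d + 1"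
proof -
  have "degree V E v = Suc (card {u1, u2})" using assms(1,6) by simp
  moreover have "finite {u1, u2}" by simp
  moreover have "{u1, u2} \<subseteq> {p. E v p}" using adj_sym[OF assms(4)] adj_sym[OF assms(5)] by simp
  ultimately obtain z where nbrs: "{p. E v p} = insert z {u1, u2}"
    by (rule neighbours_eq_insert)
  have "v \<in> V" using assms(4) adj_in_V by blast
  have toward_z: "tdist v d = tdist z d + 1" if d: "d \<in> V" "d \<notin> {v, u1, u2}" for d
  proof -
    obtain p where p: "E v p" "tdist v d = tdist p d + 1"
      using toward_neighbourE[OF \<open>v \<in> V\<close> d(1)] d(2) by blast
    moreover have "tdist u1 d = tdist v d + 1" "tdist u2 d = tdist v d + 1"
      using tdist_from_leaf[OF assms(2,4)] tdist_from_leaf[OF assms(3,5)] d by simp_all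
    ultimately have "p \<noteq> u1" "p \<noteq> u2" by auto
    with p nbrs show ?thesis by auto
  qed
  moreover have "E v z" using nbrs by auto
  ultimately show thesis by (rule that[rotated])
qed

lemma tdist_via_other_neighbour:
  assumes "{p. E c p} = {c', s}" "d \<in> V" "d \<noteq> c" "tdist c d \<noteq> tdist c' d + 1"
  shows "tdist c d = tdist s d + 1"
proof -
  have "c \<in> V" using assms(1) adj_in_V by blast
  then obtain p where "E c p" "tdist c d = tdist p d + 1"
    using toward_neighbourE assms(2,3) by metis
  with assms(1,4) show ?thesis by auto
qed

definition closer :: "'a \<Rightarrow> 'a \<Rightarrow> 'a set" where
  "closer x v = {w \<in> V. E v w \<and> tdist w x < tdist v x}"

lemma card_closer:
  assumes "x \<in> V" "v \<in> V"
  shows "card (closer x v) = (if v = x then 0 else 1)"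
proof (cases "v = x")
  case False
  then obtain p where p: "E v p" "tdist v x = tdist p x + 1"
    using toward_neighbourE assms by metis
  have "closer x v = {p}"
  proof
    show "{p} \<subseteq> closer x v" using p adj_in_V by (auto simp: closer_def)
    show "closer x v \<subseteq> {p}"
      using neighbour_not_farther_unique[OF _ p(1) assms(1)] p(2) by (force simp: closer_def)
  qed
  with False show ?thesis by simp
qed (simp add: closer_def)

lemma degree_eq_card_closer:
  assumes "x \<in> V"
  shows "degree V E v = card (closer x v) + card {w \<in> V. v \<in> closer x w}"
proof -
  have "{w \<in> V. E v w} = closer x v \<union> {w \<in> V. v \<in> closer x w}"
  proof (intro set_eqI)
    fix w
    show "w \<in> {w \<in> V. E v w} \<longleftrightarrow> w \<in> closer x v \<union> {w \<in> V. v \<in> closer x w}"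
      using tdist_adj_cases[of v w x] assms adj_sym[of v w] adj_sym[of w v] adj_in_V[of v w]
      by (auto simp: closer_def)
  qed
  moreover have "closer x v \<inter> {w \<in> V. v \<in> closer x w} = {}" by (auto simp: closer_def)
  moreover have "finite (closer x v)" using finite_V by (simp add: closer_def)
  ultimately show ?thesis unfolding degree_def using finite_V by (simp add: card_Un_disjoint)
qed

lemma sum_degree_half_pow:
  assumes "x \<in> V"
  shows "(\<Sum>v\<in>V. real (degree V E v) * (1/2) ^ tdist v x)
    = 3 * ((\<Sum>v\<in>V. (1/2) ^ tdist v x) - 1)"
proof -
  define q :: "'a \<Rightarrow> real" where "q v = (1/2) ^ tdist v x" for v
  have sum_closer: "(\<Sum>v\<in>V. real (card (closer x v)) * q v) = (\<Sum>v\<in>V. q v) - 1"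
  proof -
    have "(\<Sum>v\<in>V. real (card (closer x v)) * q v) = (\<Sum>v\<in>V. q v - (if v = x then q v else 0))"
      using card_closer[OF assms] by (intro sum.cong refl) simp
    also have "\<dots> = (\<Sum>v\<in>V. q v) - (\<Sum>v\<in>V. if v = x then q v else 0)"
      by (rule sum_subtractf)
    also have "(\<Sum>v\<in>V. if v = x then q v else 0) = 1"
      using assms finite_V by (simp add: q_def)
    finally show ?thesis .
  qed
  have "(\<Sum>v\<in>V. real (card {w \<in> V. v \<in> closer x w}) * q v)
      = (\<Sum>v\<in>V. \<Sum>w\<in>{w \<in> V. v \<in> closer x w}. q v)"
    by simp
  also have "\<dots> = (\<Sum>w\<in>V. \<Sum>v\<in>closer x w. q v)"
    by (subst sum.swap_restrict[OF finite_V finite_V]) (auto simp: closer_def intro!: sum.cong)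
  also have "\<dots> = (\<Sum>w\<in>V. \<Sum>v\<in>closer x w. 2 * q w)"
  proof (intro sum.cong refl)
    fix w v assume "v \<in> closer x w"
    then have "tdist w x = tdist v x + 1"
      using tdist_adj_cases[OF _ assms, of w v] by (auto simp: closer_def)
    then show "q v = 2 * q w" by (simp add: q_def)
  qed
  also have "\<dots> = 2 * (\<Sum>w\<in>V. real (card (closer x w)) * q w)"
    by (simp add: sum_distrib_left mult_ac)
  finally have "(\<Sum>v\<in>V. real (degree V E v) * q v) = 3 * (\<Sum>v\<in>V. real (card (closer x v)) * q v)"
    by (simp add: degree_eq_card_closer[OF assms] distrib_right sum.distrib)
  then show ?thesis using sum_closer by (simp add: q_def)
qed

lemma sum_half_pow_degree_deficit:
  assumes "x \<in> V"
  shows "(\<Sum>u\<in>V. half_pow (gdist E u x) * ((3 - real (degree V E u)) / 6)) = 1"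
proof -
  have "(\<Sum>u\<in>V. half_pow (gdist E u x) * ((3 - real (degree V E u)) / 6))
      = (\<Sum>u\<in>V. (3 * (1/2) ^ tdist u x - real (degree V E u) * (1/2) ^ tdist u x) / 3)"
    using assms by (intro sum.cong refl) (simp add: gdist_eq_tdist half_pow_enat field_simps)
  also have "\<dots> = ((\<Sum>u\<in>V. 3 * (1/2) ^ tdist u x)
      - (\<Sum>u\<in>V. real (degree V E u) * (1/2) ^ tdist u x)) / 3"
    by (simp add: sum_divide_distrib[symmetric] sum_subtractf)
  also have "\<dots> = 1"
    using sum_degree_half_pow[OF assms] by (simp add: sum_distrib_left[symmetric])
  finally show ?thesis .
qed

lemma weight_eq_sum:
  "S \<subseteq> V \<Longrightarrow> u \<in> V \<Longrightarrow> weight E S u = (\<Sum>d\<in>S. 2 * (1/2) ^ tdist u d)"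
  unfolding weight_def by (intro sum.cong refl) (auto simp: gdist_eq_tdist half_pow_enat)

lemma weight_halves:
  assumes "S \<subseteq> V" "p \<in> V" "q \<in> V" "\<And>d. d \<in> S \<Longrightarrow> tdist p d = tdist q d + 1"
  shows "weight E S p = weight E S q / 2"
  using assms by (simp add: weight_eq_sum sum_divide_distrib)

lemma weight_adj_le:
  assumes "S \<subseteq> V" "E p q"
  shows "weight E S q \<le> 2 * weight E S p"
proof -
  have V: "p \<in> V" "q \<in> V" using assms(2) adj_in_V by auto
  have "(1/2::real) ^ tdist q d \<le> 2 * (1/2) ^ tdist p d" if "d \<in> S" for d
  proof -
    have "tdist p d \<le> tdist q d + 1" using tdist_adj_le[OF assms(2)] that assms(1) by blast
    then have "(1/2::real) ^ (tdist q d + 1) \<le> (1/2) ^ tdist p d"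
      by (rule power_decreasing) simp_all
    then show ?thesis by simp
  qed
  then show ?thesis
    using assms(1) V by (simp add: weight_eq_sum sum_distrib_left sum_mono)
qed

lemma weight_away_from_side:
  assumes "S \<subseteq> V" "E c c'" "E c s" "s \<noteq> c'" "\<And>d. d \<in> S \<Longrightarrow> tdist c d = tdist c' d + 1"
  shows "weight E S s = weight E S c / 2"
    and "E s t \<Longrightarrow> t \<noteq> c \<Longrightarrow> weight E S t = weight E S c / 4"
proof -
  have V: "c \<in> V" "s \<in> V" using assms(3) adj_in_V by auto
  have far_s: "tdist s d = tdist c d + 1" if "d \<in> S" for d
    using tdist_away[OF assms(2,3) assms(4)[symmetric]] assms(1,5) that by auto
  then show "weight E S s = weight E S c / 2"
    using assms(1) V by (intro weight_halves) auto
  assume "E s t" "t \<noteq> c"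
  then have "tdist t d = tdist s d + 1" if "d \<in> S" for d
    using tdist_away[OF adj_sym[OF assms(3)] \<open>E s t\<close>] \<open>t \<noteq> c\<close> far_s that assms(1) by auto
  then have "weight E S t = weight E S s / 2"
    using assms(1) V \<open>E s t\<close> adj_in_V by (intro weight_halves) auto
  with \<open>weight E S s = weight E S c / 2\<close> show "weight E S t = weight E S c / 4" by simp
qed

end

locale tight_subcubic_tree = tree_graph +
  fixes D :: "'a set"
  assumes subcubic: "subcubic V E"
    and gamma_eq: "real (gamma_e V E) = gamma_ef V E"
    and gamma_gt_1: "gamma_ef V E > 1"
    and minimum: "min_porous_exp_dom V E D"
begin

lemma D_subset: "D \<subseteq> V"
  using minimum by (simp add: min_porous_exp_dom_def porous_exp_dom_def)

lemma finite_D: "finite D"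
  using D_subset finite_V finite_subset by blast

lemma weight_ge_1: "u \<in> V \<Longrightarrow> 1 \<le> weight E D u"
  using minimum by (simp add: min_porous_exp_dom_def porous_exp_dom_def)

lemma weight_eq_1_if_degree_less_3:
  assumes "u \<in> V" "degree V E u < 3"
  shows "weight E D u = 1"
proof (rule weight_eq_1_of_tight_solution[where y = "\<lambda>u. (3 - real (degree V E u)) / 6"])
  show "porous_exp_dom V E D" "real (card D) \<le> gamma_ef V E"
    using minimum gamma_eq by (simp_all add: min_porous_exp_dom_def)
  show "0 \<le> (3 - real (degree V E v)) / 6" if "v \<in> V" for v
    using subcubic that by (simp add: subcubic_def)
qed (use assms finite_V sum_half_pow_degree_deficit in auto)

lemma degree_eq_3_if_in_D:
  assumes "d \<in> D"
  shows "degree V E d = 3"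
proof -
  have "d \<in> V" using assms D_subset by blast
  moreover have "weight E D d \<noteq> 1" using weight_ge_2_of_mem[OF finite_D assms, of E] by simp
  ultimately show ?thesis
    using weight_eq_1_if_degree_less_3 subcubic by (force simp: subcubic_def)
qed

lemma not_in_D_if_degree_less_3: "degree V E u < 3 \<Longrightarrow> u \<notin> D"
  using degree_eq_3_if_in_D by fastforce

lemma neighbour_of_low_degree_not_in_D:
  assumes "x \<in> V" "degree V E x < 3" "E x v"
  shows "v \<notin> D"
proof
  assume "v \<in> D"
  have "card D > 1" using minimum gamma_eq gamma_gt_1 by (simp add: min_porous_exp_dom_def)
  then obtain d where d: "d \<in> D" "d \<noteq> v" using \<open>v \<in> D\<close>
    by (metis card_le_Suc0_iff_eq finite_D not_le One_nat_def)
  have "weight E {v, d} x \<le> weight E D x"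
    using d \<open>v \<in> D\<close> by (intro weight_mono finite_D) auto
  moreover have "weight E {v, d} x = 1 + half_pow (gdist E x d)"
    using d(2) assms(3) adj_in_V by (simp add: weight_def gdist_eq_tdist tdist_adj half_pow_enat)
  moreover have "half_pow (gdist E x d) > 0"
    using d(1) D_subset assms(1) by (auto simp: gdist_eq_tdist half_pow_enat)
  ultimately show False using weight_eq_1_if_degree_less_3[OF assms(1,2)] by simp
qed

lemma neighbour_of_low_degree_has_degree_3:
  assumes "x \<in> V" "degree V E x < 3" "E x v"
  shows "degree V E v = 3"
proof (rule ccontr)
  assume "degree V E v \<noteq> 3"
  then have "degree V E v < 3" using subcubic assms(3) adj_in_V by (force simp: subcubic_def)
  then have "weight E D v = 1" using weight_eq_1_if_degree_less_3 assms(3) adj_in_V by blast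
  \<comment> \<open>With weight 1 at both ends of the edge, the part A of D lying behind v would have
    weight 2/3 at v, which is not a dyadic rational.\<close>
  define A where "A = {d \<in> D. tdist x d = tdist v d + 1}"
  have V: "x \<in> V" "v \<in> V" and A: "A \<subseteq> D" "D - A \<subseteq> V"
    using assms adj_in_V D_subset by (auto simp: A_def)
  have "weight E A x = weight E A v / 2"
    using A D_subset V by (intro weight_halves) (auto simp: A_def)
  moreover have "weight E (D - A) v = weight E (D - A) x / 2"
    using tdist_adj_cases[OF assms(3)] A V by (intro weight_halves) (auto simp: A_def)
  ultimately have "weight E A v / 2 + weight E (D - A) x = 1"
    and "weight E A v + weight E (D - A) x / 2 = 1"
    using weight_Diff[OF finite_D A(1)] weight_eq_1_if_degree_less_3[OF assms(1,2)]
      \<open>weight E D v = 1\<close>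
    by (metis add.commute)+
  then have "(\<Sum>d\<in>A. (1/2::real) ^ tdist v d) = 1/3"
    using A(1) D_subset V(2) by (simp add: weight_eq_sum sum_distrib_left[symmetric])
  moreover have "finite A" using finite_D A(1) finite_subset by blast
  ultimately show False using sum_powers_half_neq_one_third by blast
qed

lemma nbhd_low_degree_subset: "nbhd V E (deg_set V E 1 \<union> deg_set V E 2) \<subseteq> deg_set V E 3 - D"
proof
  fix v assume "v \<in> nbhd V E (deg_set V E 1 \<union> deg_set V E 2)"
  then obtain x where x: "x \<in> V" "degree V E x < 3" "E x v" and "v \<in> V"
    by (auto simp: nbhd_def deg_set_def)
  then show "v \<in> deg_set V E 3 - D"
    using neighbour_of_low_degree_has_degree_3[OF x] neighbour_of_low_degree_not_in_D[OF x]
    by (simp add: deg_set_def)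
qed

lemma weight_neighbour_of_leaf:
  assumes "degree V E u = 1" "E u v"
  shows "weight E D v = 2"
proof -
  have V: "u \<in> V" "v \<in> V" using assms(2) adj_in_V by auto
  have "u \<notin> D" using not_in_D_if_degree_less_3 assms(1) by simp
  then have "weight E D u = weight E D v / 2"
    using D_subset V tdist_from_leaf[OF assms] by (intro weight_halves) auto
  with weight_eq_1_if_degree_less_3[OF V(1)] assms(1) show ?thesis by simp
qed

lemma weight_near_degree_2:
  assumes "degree V E c = 2" "E c s"
  shows "weight E D s \<le> 3/2" and "\<And>t. E s t \<Longrightarrow> t \<noteq> c \<Longrightarrow> weight E D t \<le> 11/4"
proof -
  have cV: "c \<in> V" "c \<notin> D" using assms adj_in_V not_in_D_if_degree_less_3 by auto
  obtain c' where "c' \<noteq> s" and nbrs: "{p. E c p} = {c', s}"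
    using neighbours_eq_insert[of c "{s}"] assms by auto
  then have "E c c'" by auto
  \<comment> \<open>P and R are the contributions at c of the members of D beyond c' and beyond s;
    P + R = 1 and 2 P + R / 2 \<ge> 1 (the weight at c') give P \<ge> 1/3.\<close>
  define A where "A = {d \<in> D. tdist c d = tdist c' d + 1}"
  define P where "P = weight E A c"
  define R where "R = weight E (D - A) c"
  have A: "A \<subseteq> V" "D - A \<subseteq> V" "A \<subseteq> D" using D_subset by (auto simp: A_def)
  have V: "s \<in> V" "c' \<in> V" using assms(2) \<open>E c c'\<close> adj_in_V by auto
  have split: "weight E D u = weight E A u + weight E (D - A) u" for u
    using weight_Diff[OF finite_D A(3)] .
  have "P \<ge> 0" "R \<ge> 0" unfolding P_def R_def by (simp_all add: weight_nonneg)
  have "P + R = 1"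
    using split weight_eq_1_if_degree_less_3 cV assms(1) unfolding P_def R_def by simp
  have "weight E A c = weight E A c' / 2"
    using A V cV by (intro weight_halves) (auto simp: A_def)
  moreover have "weight E (D - A) c' = weight E (D - A) c / 2"
    using tdist_adj_cases[OF \<open>E c c'\<close>] A V cV by (intro weight_halves) (auto simp: A_def)
  ultimately have "weight E D c' = 2 * P + R / 2" using split unfolding P_def R_def by simp
  then have "P \<ge> 1/3" using weight_ge_1[OF V(2)] \<open>P + R = 1\<close> by simp
  have A_away: "weight E A s = P / 2" "\<And>t. E s t \<Longrightarrow> t \<noteq> c \<Longrightarrow> weight E A t = P / 4"
    using weight_away_from_side[OF A(1) \<open>E c c'\<close> assms(2) \<open>c' \<noteq> s\<close>[symmetric]] unfolding P_def A_def
    by auto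
  have "weight E (D - A) c = weight E (D - A) s / 2"
    using tdist_via_other_neighbour[OF nbrs] A V cV by (intro weight_halves) (auto simp: A_def)
  then have B_s: "weight E (D - A) s = 2 * R" unfolding R_def by simp
  then show "weight E D s \<le> 3/2"
    using split A_away(1) \<open>P + R = 1\<close> \<open>P \<ge> 1/3\<close> by simp
  fix t assume "E s t" "t \<noteq> c"
  have "weight E (D - A) t \<le> 4 * R"
    using weight_adj_le[OF A(2) \<open>E s t\<close>] B_s by simp
  then show "weight E D t \<le> 11/4"
    using split A_away(2)[OF \<open>E s t\<close> \<open>t \<noteq> c\<close>] \<open>P + R = 1\<close> \<open>P \<ge> 1/3\<close> by simp
qed

lemma leaf_not_at_distance_2_from_degree_2:
  assumes "u \<in> deg_set V E 1" "w \<in> deg_set V E 2"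
  shows "gdist E u w \<noteq> 2"
proof
  have V: "u \<in> V" "w \<in> V" and deg: "degree V E u = 1" "degree V E w = 2"
    using assms by (simp_all add: deg_set_def)
  assume "gdist E u w = 2"
  then have "tdist u w = 2" using V by (simp add: gdist_eq_numeral_iff)
  then obtain v where "E u v" "E v w" by (rule tdist_eq_2E[OF V])
  then have "weight E D v = 2" using weight_neighbour_of_leaf[OF deg(1)] by blast
  moreover have "weight E D v \<le> 3/2"
    using weight_near_degree_2(1)[OF deg(2) adj_sym[OF \<open>E v w\<close>]] .
  ultimately show False by simp
qed

lemma cherry_third_neighbourE:
  assumes "degree V E u1 = 1" "degree V E u2 = 1" "E u1 v" "E u2 v" "u1 \<noteq> u2"
  obtains z where "degree V E v = 3" "E v z" "weight E D z = 4"
    "\<And>d. d \<in> V \<Longrightarrow> d \<notin> {v, u1, u2} \<Longrightarrow> tdist v d = tdist z d + 1"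
proof -
  have low: "u1 \<in> V" "degree V E u1 < 3" "E u1 v" using assms(1,3) adj_in_V by auto
  have "degree V E v = 3" "v \<notin> D"
    using neighbour_of_low_degree_has_degree_3[OF low] neighbour_of_low_degree_not_in_D[OF low]
    by simp_all
  obtain z where "E v z"
    and toward_z: "\<And>d. d \<in> V \<Longrightarrow> d \<notin> {v, u1, u2} \<Longrightarrow> tdist v d = tdist z d + 1"
    using toward_third_neighbourE[OF \<open>degree V E v = 3\<close> assms] by blast
  have "{v, u1, u2} \<inter> D = {}"
    using \<open>v \<notin> D\<close> not_in_D_if_degree_less_3 assms(1,2) by auto
  then have "weight E D v = weight E D z / 2"
    using D_subset toward_z adj_in_V[OF \<open>E v z\<close>] by (intro weight_halves) auto
  with weight_neighbour_of_leaf[OF assms(1,3)] have "weight E D z = 4" by simp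
  then show thesis by (rule that[OF \<open>degree V E v = 3\<close> \<open>E v z\<close> _ toward_z])
qed

lemma leaf_pair_not_near_degree_2:
  assumes "u1 \<in> deg_set V E 1" "u2 \<in> deg_set V E 1" "w \<in> deg_set V E 2"
    and "gdist E u1 u2 = 2"
  shows "gdist E u1 w \<noteq> 3 \<and> gdist E u1 w \<noteq> 4"
proof -
  have V: "u1 \<in> V" "u2 \<in> V" "w \<in> V"
    and deg: "degree V E u1 = 1" "degree V E u2 = 1" "degree V E w = 2"
    using assms(1-3) by (simp_all add: deg_set_def)
  have "tdist u1 u2 = 2" using assms(4) V by (simp add: gdist_eq_numeral_iff)
  then obtain v where "E u1 v" "E v u2" by (rule tdist_eq_2E[OF V(1,2)])
  have "u1 \<noteq> u2" using \<open>tdist u1 u2 = 2\<close> by auto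
  obtain z where "degree V E v = 3" "E v z" "weight E D z = 4"
    and toward_z: "\<And>d. d \<in> V \<Longrightarrow> d \<notin> {v, u1, u2} \<Longrightarrow> tdist v d = tdist z d + 1"
    using cherry_third_neighbourE[OF deg(1,2) \<open>E u1 v\<close> adj_sym[OF \<open>E v u2\<close>] \<open>u1 \<noteq> u2\<close>]
    by blast
  have zV: "z \<in> V" using \<open>E v z\<close> adj_in_V by blast
  have "w \<notin> {v, u1, u2}" using deg \<open>degree V E v = 3\<close> by auto
  then have "tdist u1 w = tdist z w + 2"
    using tdist_from_leaf[OF deg(1) \<open>E u1 v\<close> V(3)] toward_z[OF V(3)] by simp
  moreover have "tdist z w \<noteq> 1"
  proof
    assume "tdist z w = 1"
    then have "E z w" using tdist_eq_1_iff[OF zV V(3)] by simp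
    then show False
      using weight_near_degree_2(1)[OF deg(3) adj_sym[OF \<open>E z w\<close>]] \<open>weight E D z = 4\<close>
      by simp
  qed
  moreover have "tdist z w \<noteq> 2"
  proof
    assume "tdist z w = 2"
    then obtain s where "E z s" "E s w" by (rule tdist_eq_2E[OF zV V(3)])
    moreover have "z \<noteq> w" using \<open>tdist z w = 2\<close> by auto
    ultimately show False
      using weight_near_degree_2(2)[OF deg(3) adj_sym[OF \<open>E s w\<close>] adj_sym[OF \<open>E z s\<close>]]
        \<open>weight E D z = 4\<close> by simp
  qed
  ultimately show ?thesis using V by (simp add: gdist_eq_numeral_iff)
qed

end

theorem theorem3:
  fixes V :: "'a set" and E :: "'a \<Rightarrow> 'a \<Rightarrow> bool" and D :: "'a set"
  assumes "tree V E" and "subcubic V E"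
    and "real (gamma_e V E) = gamma_ef V E" and "gamma_ef V E > 1"
    and "min_porous_exp_dom V E D"
  shows "(\<forall>u \<in> deg_set V E 1 \<union> deg_set V E 2. weight E D u = 1)
    \<and> D \<subseteq> deg_set V E 3
    \<and> nbhd V E (deg_set V E 1 \<union> deg_set V E 2) \<subseteq> deg_set V E 3 - D
    \<and> \<not> (\<exists>u \<in> deg_set V E 1. \<exists>w \<in> deg_set V E 2. gdist E u w = 2)
    \<and> \<not> (\<exists>u1 \<in> deg_set V E 1. \<exists>u2 \<in> deg_set V E 1. \<exists>v \<in> deg_set V E 2.
          gdist E u1 u2 = 2 \<and> (gdist E u1 v = 3 \<or> gdist E u1 v = 4))"
proof -
  interpret tight_subcubic_tree V E D
    by (rule tight_subcubic_tree.intro[OF tree_graph.intro tight_subcubic_tree_axioms.intro])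
      (fact assms)+
  have "\<forall>u \<in> deg_set V E 1 \<union> deg_set V E 2. weight E D u = 1"
    by (auto simp: deg_set_def intro: weight_eq_1_if_degree_less_3)
  moreover have "D \<subseteq> deg_set V E 3"
    using D_subset degree_eq_3_if_in_D by (auto simp: deg_set_def)
  ultimately show ?thesis
    using nbhd_low_degree_subset leaf_not_at_distance_2_from_degree_2 leaf_pair_not_near_degree_2
    by blast
qed

end
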